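(* Assume the standing setting described in the context. Let $\boldsymbol w_h^R\in H(\mathrm{div},\Omega)$ satisfy \[ \tau\,\mathrm{div}\,\boldsymbol w_h^R=g+\frac{p_h-P_h^1\varphi_h}{\lambda}\quad\text{in }\Omega, \] and let $C_F>0$ be the Poincaré–Friedrichs constant, i.e. $\|\psi\|\le C_F\|\nabla\psi\|$ for all $\psi\in H_0^1(\Omega)$. Then \[ \frac34\tau\|\nabla(\varphi-\varphi_h)\|^2+\frac2\lambda\big(\varphi-\varphi_h-(p-p_h),\varphi-\varphi_h\big)\le \eta_F^2+4C_F^2\eta_P^2, \] where $\eta_F=\tau^{1/2}\|\boldsymbol w_h^R+\nabla\varphi_h\|$ and $\eta_P=\frac{1}{\lambda\tau^{1/2}}\|\varphi_h-P_h^1\varphi_h\|$.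
   Context: Standing setting: $\Omega\subset\mathbb R^d$, $d\in\{2,3\}$, is a bounded polygonal/polyhedral Lipschitz domain with a conforming simplicial triangulation $\mathcal T_h$. $(\cdot,\cdot)$ denotes the $L^2(\Omega)$ inner product and $\|\cdot\|$ the $L^2(\Omega)$ norm. Parameters $\mu,\lambda,\tau>0$; data $\boldsymbol f\in L^2(\Omega)^d$, $g\in L^2(\Omega)$. $\boldsymbol\varepsilon(\boldsymbol v)=\frac12(\nabla\boldsymbol v+\nabla\boldsymbol v^T)$. The exact solution $(\boldsymbol u,p,\varphi)\in H_0^1(\Omega)^d\times L^2(\Omega)\times H_0^1(\Omega)$ satisfies $2\mu(\boldsymbol\varepsilon(\boldsymbol u),\boldsymbol\varepsilon(\boldsymbol v))-(p,\mathrm{div}\,\boldsymbol v)=(\boldsymbol f,\boldsymbol v)$ for all $\boldsymbol v\in H_0^1(\Omega)^d$; $(\mathrm{div}\,\boldsymbol u,q)+\frac1\lambda(p-\varphi,q)=0$ for all $q\in L^2(\Omega)$; $\frac1\lambda(\varphi-p,\psi)+\tau(\nabla\varphi,\nabla\psi)=(g,\psi)$ for all $\psi\in H_0^1(\Omega)$. The discrete solution $(\boldsymbol u_h,p_h,\varphi_h)\in \mathbf V_h\times Q_h\times S_h$ satisfies the same three equations with all test functions restricted to $\mathbf V_h\times Q_h\times S_h$, where $\mathbf V_h\subset H_0^1(\Omega)^d$ are continuous piecewise quadratic vector fields, $Q_h$ continuous piecewise linear functions, $S_h\subset H_0^1(\Omega)$ continuous piecewise quadratic functions on $\mathcal T_h$.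 $P_h^1$ denotes the $L^2(\Omega)$-orthogonal projection onto the space of (possibly discontinuous) piecewise linear functions on $\mathcal T_h$. *)

theory Defs
  imports "HOL-Analysis.Analysis"
begin

definition lipschitz_domain :: "(real^'n) set \<Rightarrow> bool" where
  "lipschitz_domain \<Omega> \<longleftrightarrow> open \<Omega> \<and> bounded \<Omega> \<and> connected \<Omega> \<and> \<Omega> \<noteq> {} \<and>
     (\<forall>x\<in>frontier \<Omega>. \<exists>e r L (\<gamma>::real^'n \<Rightarrow> real). norm e = 1 \<and> r > 0 \<and>
        L-lipschitz_on {z. z \<bullet> e = 0} \<gamma> \<and>
        \<Omega> \<inter> ball x r = {y \<in> ball x r. y \<bullet> e < \<gamma> (y - (y \<bullet> e) *\<^sub>R e)})"

definition simplex_with_vertices :: "(real^'n) set \<Rightarrow> (real^'n) set \<Rightarrow> bool" where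
  "simplex_with_vertices V T \<longleftrightarrow> finite V \<and> card V = CARD('n) + 1 \<and> \<not> affine_dependent V
     \<and> T = convex hull V"

definition conforming_triangulation :: "(real^'n) set \<Rightarrow> (real^'n) set set \<Rightarrow> bool" where
  "conforming_triangulation \<Omega> \<T> \<longleftrightarrow> finite \<T> \<and> \<T> \<noteq> {} \<and>
     (\<forall>T\<in>\<T>. \<exists>V. simplex_with_vertices V T) \<and> \<Union>\<T> = closure \<Omega> \<and>
     (\<forall>T\<in>\<T>. \<forall>T'\<in>\<T>. \<forall>V V'. simplex_with_vertices V T \<and> simplex_with_vertices V' T'
         \<longrightarrow> T \<inter> T' = convex hull (V \<inter> V'))"

definition L2 :: "(real^'n) set \<Rightarrow> (real^'n \<Rightarrow> real) \<Rightarrow> bool" where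
  "L2 \<Omega> f \<longleftrightarrow> f \<in> borel_measurable (lebesgue_on \<Omega>) \<and> integrable (lebesgue_on \<Omega>) (\<lambda>x. (f x)\<^sup>2)"

definition L2v :: "(real^'n) set \<Rightarrow> (real^'n \<Rightarrow> real^'m) \<Rightarrow> bool" where
  "L2v \<Omega> F \<longleftrightarrow> F \<in> borel_measurable (lebesgue_on \<Omega>) \<and> integrable (lebesgue_on \<Omega>) (\<lambda>x. (norm (F x))\<^sup>2)"

definition ip :: "(real^'n) set \<Rightarrow> (real^'n \<Rightarrow> real) \<Rightarrow> (real^'n \<Rightarrow> real) \<Rightarrow> real" where
  "ip \<Omega> f g = (\<integral>x. f x * g x \<partial>lebesgue_on \<Omega>)"

definition ipv :: "(real^'n) set \<Rightarrow> (real^'n \<Rightarrow> real^'m) \<Rightarrow> (real^'n \<Rightarrow> real^'m) \<Rightarrow> real" where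
  "ipv \<Omega> F G = (\<integral>x. F x \<bullet> G x \<partial>lebesgue_on \<Omega>)"

definition frob :: "real^'n^'n \<Rightarrow> real^'n^'n \<Rightarrow> real" where
  "frob A B = (\<Sum>i\<in>UNIV. A $ i \<bullet> B $ i)"

definition ipm :: "(real^'n) set \<Rightarrow> (real^'n \<Rightarrow> real^'n^'n) \<Rightarrow> (real^'n \<Rightarrow> real^'n^'n) \<Rightarrow> real" where
  "ipm \<Omega> A B = (\<integral>x. frob (A x) (B x) \<partial>lebesgue_on \<Omega>)"

definition nrm :: "(real^'n) set \<Rightarrow> (real^'n \<Rightarrow> real) \<Rightarrow> real" where
  "nrm \<Omega> f = sqrt (ip \<Omega> f f)"

definition nrmv :: "(real^'n) set \<Rightarrow> (real^'n \<Rightarrow> real^'m) \<Rightarrow> real" where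
  "nrmv \<Omega> F = sqrt (ipv \<Omega> F F)"

definition partial_fun :: "'n \<Rightarrow> (real^'n \<Rightarrow> real) \<Rightarrow> real^'n \<Rightarrow> real" where
  "partial_fun i f = (\<lambda>x. frechet_derivative f (at x) (axis i 1))"

definition Cinf :: "(real^'n \<Rightarrow> real) \<Rightarrow> bool" where
  "Cinf f \<longleftrightarrow> (\<forall>is::'n list. continuous_on UNIV (foldr partial_fun is f) \<and>
                             (\<forall>x. foldr partial_fun is f differentiable (at x)))"

definition test_fun :: "(real^'n) set \<Rightarrow> (real^'n \<Rightarrow> real) \<Rightarrow> bool" where
  "test_fun \<Omega> \<phi> \<longleftrightarrow> Cinf \<phi> \<and> compact (closure {x. \<phi> x \<noteq> 0}) \<and> closure {x. \<phi> x \<noteq> 0} \<subseteq> \<Omega>"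

definition cgrad :: "(real^'n \<Rightarrow> real) \<Rightarrow> real^'n \<Rightarrow> real^'n" where
  "cgrad \<phi> x = (\<chi> i. partial_fun i \<phi> x)"

definition weak_grad :: "(real^'n) set \<Rightarrow> (real^'n \<Rightarrow> real) \<Rightarrow> (real^'n \<Rightarrow> real^'n) \<Rightarrow> bool" where
  "weak_grad \<Omega> u G \<longleftrightarrow> (\<forall>\<phi>. test_fun \<Omega> \<phi> \<longrightarrow>
      (\<integral>x. u x *\<^sub>R cgrad \<phi> x \<partial>lebesgue_on \<Omega>) = - (\<integral>x. \<phi> x *\<^sub>R G x \<partial>lebesgue_on \<Omega>))"

definition weak_div :: "(real^'n) set \<Rightarrow> (real^'n \<Rightarrow> real^'n) \<Rightarrow> (real^'n \<Rightarrow> real) \<Rightarrow> bool" where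
  "weak_div \<Omega> w D \<longleftrightarrow> (\<forall>\<phi>. test_fun \<Omega> \<phi> \<longrightarrow>
      (\<integral>x. w x \<bullet> cgrad \<phi> x \<partial>lebesgue_on \<Omega>) = - (\<integral>x. D x * \<phi> x \<partial>lebesgue_on \<Omega>))"

definition H1 :: "(real^'n) set \<Rightarrow> (real^'n \<Rightarrow> real) \<Rightarrow> (real^'n \<Rightarrow> real^'n) \<Rightarrow> bool" where
  "H1 \<Omega> u G \<longleftrightarrow> L2 \<Omega> u \<and> L2v \<Omega> G \<and> weak_grad \<Omega> u G"

definition H01 :: "(real^'n) set \<Rightarrow> (real^'n \<Rightarrow> real) \<Rightarrow> (real^'n \<Rightarrow> real^'n) \<Rightarrow> bool" where
  "H01 \<Omega> u G \<longleftrightarrow> H1 \<Omega> u G \<and>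
     (\<exists>\<phi>s. (\<forall>k. test_fun \<Omega> (\<phi>s k)) \<and>
        (\<lambda>k. (nrm \<Omega> (\<lambda>x. u x - \<phi>s k x))\<^sup>2 + (nrmv \<Omega> (\<lambda>x. G x - cgrad (\<phi>s k) x))\<^sup>2)
          \<longlonglongrightarrow> 0)"

text \<open>Vector fields in (H_0^1)^d; Dv x is the Jacobian, row i = gradient of component i.\<close>
definition H01v :: "(real^'n) set \<Rightarrow> (real^'n \<Rightarrow> real^'n) \<Rightarrow> (real^'n \<Rightarrow> real^'n^'n) \<Rightarrow> bool" where
  "H01v \<Omega> v Dv \<longleftrightarrow> (\<forall>i. H01 \<Omega> (\<lambda>x. v x $ i) (\<lambda>x. Dv x $ i))"

definition Hdiv :: "(real^'n) set \<Rightarrow> (real^'n \<Rightarrow> real^'n) \<Rightarrow> bool" where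
  "Hdiv \<Omega> w \<longleftrightarrow> L2v \<Omega> w \<and> (\<exists>D. L2 \<Omega> D \<and> weak_div \<Omega> w D)"

definition symgrad :: "real^'n^'n \<Rightarrow> real^'n^'n" where
  "symgrad A = (1/2) *\<^sub>R (A + transpose A)"

definition divj :: "real^'n^'n \<Rightarrow> real" where
  "divj A = trace A"

definition pw_linear :: "(real^'n) set set \<Rightarrow> (real^'n \<Rightarrow> real) \<Rightarrow> bool" where
  "pw_linear \<T> f \<longleftrightarrow> (\<forall>T\<in>\<T>. \<exists>c b. \<forall>x\<in>T. f x = c + b \<bullet> x)"

definition pw_quadratic :: "(real^'n) set set \<Rightarrow> (real^'n \<Rightarrow> real) \<Rightarrow> bool" where
  "pw_quadratic \<T> f \<longleftrightarrow> (\<forall>T\<in>\<T>. \<exists>c b (A::real^'n^'n). \<forall>x\<in>T. f x = c + b \<bullet> x + x \<bullet> (A *v x))"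

definition Qh :: "(real^'n) set \<Rightarrow> (real^'n) set set \<Rightarrow> (real^'n \<Rightarrow> real) set" where
  "Qh \<Omega> \<T> = {q. continuous_on (closure \<Omega>) q \<and> pw_linear \<T> q}"

definition Sh :: "(real^'n) set \<Rightarrow> (real^'n) set set \<Rightarrow> (real^'n \<Rightarrow> real) \<Rightarrow> (real^'n \<Rightarrow> real^'n) \<Rightarrow> bool" where
  "Sh \<Omega> \<T> \<psi> G \<longleftrightarrow> H01 \<Omega> \<psi> G \<and> continuous_on (closure \<Omega>) \<psi> \<and> pw_quadratic \<T> \<psi>"

definition Vh :: "(real^'n) set \<Rightarrow> (real^'n) set set \<Rightarrow> (real^'n \<Rightarrow> real^'n) \<Rightarrow> (real^'n \<Rightarrow> real^'n^'n) \<Rightarrow> bool" where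
  "Vh \<Omega> \<T> v Dv \<longleftrightarrow> H01v \<Omega> v Dv \<and>
     (\<forall>i. continuous_on (closure \<Omega>) (\<lambda>x. v x $ i) \<and> pw_quadratic \<T> (\<lambda>x. v x $ i))"

text \<open>Discontinuous piecewise linear functions (prescribed on element interiors, i.e. a.e.).\<close>
definition DG1 :: "(real^'n) set set \<Rightarrow> (real^'n \<Rightarrow> real) \<Rightarrow> bool" where
  "DG1 \<T> q \<longleftrightarrow> (\<forall>T\<in>\<T>. \<exists>c b. \<forall>x\<in>interior T. q x = c + b \<bullet> x)"

definition is_P1_projection :: "(real^'n) set \<Rightarrow> (real^'n) set set \<Rightarrow> (real^'n \<Rightarrow> real) \<Rightarrow> (real^'n \<Rightarrow> real) \<Rightarrow> bool" where
  "is_P1_projection \<Omega> \<T> f Pf \<longleftrightarrow> L2 \<Omega> Pf \<and> DG1 \<T> Pf \<and>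
     (\<forall>q. L2 \<Omega> q \<and> DG1 \<T> q \<longrightarrow> ip \<Omega> (\<lambda>x. f x - Pf x) q = 0)"

end

theory Submission
  imports Defs
begin

text \<open>Put \<open>e = \<phi> - \<phi>\<^sub>h\<close>, which lies in \<open>H\<^sub>0\<^sup>1\<close>. Testing the continuous equation for \<open>\<phi>\<close>
  with \<open>e\<close>, and integrating the equilibration condition for \<open>w\<^sub>h\<^sup>R\<close> by parts against \<open>e\<close>, gives
  the energy identity
  \<open>\<tau> \<parallel>\<nabla>e\<parallel>\<^sup>2 + \<lambda>\<^sup>-\<^sup>1 (e - (p - p\<^sub>h), e) = - \<tau> (w\<^sub>h\<^sup>R + \<nabla>\<phi>\<^sub>h, \<nabla>e) - \<lambda>\<^sup>-\<^sup>1 (\<phi>\<^sub>h - P\<^sub>h\<^sup>1\<phi>\<^sub>h, e)\<close>.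
  By Cauchy-Schwarz, the Friedrichs inequality \<open>\<parallel>e\<parallel> \<le> C\<^sub>F \<parallel>\<nabla>e\<parallel>\<close> and Young's inequality the
  right-hand side is at most \<open>5/8 \<tau> \<parallel>\<nabla>e\<parallel>\<^sup>2 + \<eta>\<^sub>F\<^sup>2/2 + 2 C\<^sub>F\<^sup>2 \<eta>\<^sub>P\<^sup>2\<close>, and absorbing the first
  term into the left-hand side gives the estimate.\<close>

section \<open>Square-integrable functions\<close>

definition square_integrable :: "'a measure \<Rightarrow> ('a \<Rightarrow> 'b::real_normed_vector) \<Rightarrow> bool" where
  "square_integrable M F \<longleftrightarrow> F \<in> borel_measurable M \<and> integrable M (\<lambda>x. (norm (F x))\<^sup>2)"

definition L2_inner :: "'a measure \<Rightarrow> ('a \<Rightarrow> 'b::real_inner) \<Rightarrow> ('a \<Rightarrow> 'b) \<Rightarrow> real" where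
  "L2_inner M F G = (\<integral>x. F x \<bullet> G x \<partial>M)"

definition L2_norm :: "'a measure \<Rightarrow> ('a \<Rightarrow> 'b::real_inner) \<Rightarrow> real" where
  "L2_norm M F = sqrt (L2_inner M F F)"

lemma L2_iff_square_integrable: "L2 \<Omega> f \<longleftrightarrow> square_integrable (lebesgue_on \<Omega>) f"
  by (simp add: L2_def square_integrable_def)

lemma L2v_iff_square_integrable: "L2v \<Omega> F \<longleftrightarrow> square_integrable (lebesgue_on \<Omega>) F"
  by (simp add: L2v_def square_integrable_def)

lemma ip_eq_L2_inner: "ip \<Omega> = L2_inner (lebesgue_on \<Omega>)"
  by (simp add: fun_eq_iff ip_def L2_inner_def)

lemma ipv_eq_L2_inner: "ipv \<Omega> = L2_inner (lebesgue_on \<Omega>)"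
  by (simp add: fun_eq_iff ipv_def L2_inner_def)

lemma nrm_eq_L2_norm: "nrm \<Omega> = L2_norm (lebesgue_on \<Omega>)"
  by (simp add: fun_eq_iff nrm_def L2_norm_def ip_eq_L2_inner)

lemma nrmv_eq_L2_norm: "nrmv \<Omega> = L2_norm (lebesgue_on \<Omega>)"
  by (simp add: fun_eq_iff nrmv_def L2_norm_def ipv_eq_L2_inner)

context
  fixes M :: "'a measure"
begin

lemma square_integrable_integrable_bound:
  fixes H :: "'a \<Rightarrow> 'c::{banach, second_countable_topology}"
  assumes "square_integrable M F" "square_integrable M G" "H \<in> borel_measurable M"
    and "\<And>x. norm (H x) \<le> norm (F x) * norm (G x)"
  shows "integrable M H"
proof (rule Bochner_Integration.integrable_bound)
  show "integrable M (\<lambda>x. (norm (F x))\<^sup>2 + (norm (G x))\<^sup>2)"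
    using assms(1,2) by (simp add: square_integrable_def)
  show "AE x in M. norm (H x) \<le> norm ((norm (F x))\<^sup>2 + (norm (G x))\<^sup>2)"
  proof (rule AE_I2)
    fix x
    have "norm (F x) * norm (G x) \<le> (norm (F x))\<^sup>2 + (norm (G x))\<^sup>2"
      using sum_squares_bound[of "norm (F x)" "norm (G x)"]
        mult_nonneg_nonneg[OF norm_ge_zero norm_ge_zero, of "F x" "G x"] by linarith
    then show "norm (H x) \<le> norm ((norm (F x))\<^sup>2 + (norm (G x))\<^sup>2)"
      using assms(4)[of x] by simp
  qed
qed (fact assms(3))

lemma square_integrable_inner:
  fixes F G :: "'a \<Rightarrow> 'b::{real_inner, second_countable_topology}"
  assumes "square_integrable M F" "square_integrable M G"
  shows "integrable M (\<lambda>x. F x \<bullet> G x)"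
  using assms by (intro square_integrable_integrable_bound[OF assms])
    (auto simp: square_integrable_def Cauchy_Schwarz_ineq2)

lemma square_integrable_scaleR:
  fixes G :: "'a \<Rightarrow> 'b::{banach, second_countable_topology}"
  assumes "square_integrable M f" "square_integrable M G"
  shows "integrable M (\<lambda>x. f x *\<^sub>R G x)"
  using assms by (intro square_integrable_integrable_bound[OF assms]) (auto simp: square_integrable_def)

lemma square_integrable_add:
  fixes F G :: "'a \<Rightarrow> 'b::{real_normed_vector, second_countable_topology}"
  assumes "square_integrable M F" "square_integrable M G"
  shows "square_integrable M (\<lambda>x. F x + G x)"
  unfolding square_integrable_def
proof
  show m: "(\<lambda>x. F x + G x) \<in> borel_measurable M"
    using assms by (intro borel_measurable_add) (simp_all add: square_integrable_def)
  show "integrable M (\<lambda>x. (norm (F x + G x))\<^sup>2)"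
  proof (rule Bochner_Integration.integrable_bound)
    show "integrable M (\<lambda>x. 2 * (norm (F x))\<^sup>2 + 2 * (norm (G x))\<^sup>2)"
      using assms by (simp add: square_integrable_def)
    show "(\<lambda>x. (norm (F x + G x))\<^sup>2) \<in> borel_measurable M"
      using m by measurable
    show "AE x in M. norm ((norm (F x + G x))\<^sup>2) \<le> norm (2 * (norm (F x))\<^sup>2 + 2 * (norm (G x))\<^sup>2)"
    proof (rule AE_I2)
      fix x
      have "(norm (F x + G x))\<^sup>2 \<le> (norm (F x) + norm (G x))\<^sup>2"
        by (simp add: norm_triangle_ineq power_mono)
      also have "\<dots> \<le> 2 * (norm (F x))\<^sup>2 + 2 * (norm (G x))\<^sup>2"
        using sum_squares_bound[of "norm (F x)" "norm (G x)"] by (simp add: power2_sum)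
      finally show "norm ((norm (F x + G x))\<^sup>2) \<le> norm (2 * (norm (F x))\<^sup>2 + 2 * (norm (G x))\<^sup>2)"
        by simp
    qed
  qed
qed

lemma square_integrable_scaleR_const:
  fixes F :: "'a \<Rightarrow> 'b::{real_normed_vector, second_countable_topology}"
  assumes "square_integrable M F"
  shows "square_integrable M (\<lambda>x. c *\<^sub>R F x)"
  using assms by (simp add: square_integrable_def power_mult_distrib borel_measurable_scaleR)

lemma square_integrable_diff:
  fixes F G :: "'a \<Rightarrow> 'b::{real_normed_vector, second_countable_topology}"
  assumes "square_integrable M F" "square_integrable M G"
  shows "square_integrable M (\<lambda>x. F x - G x)"
  using square_integrable_add[OF assms(1) square_integrable_scaleR_const[OF assms(2), of "-1"]]
  by simp

lemma square_integrable_divide_const: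
  fixes f :: "'a \<Rightarrow> real"
  assumes "square_integrable M f"
  shows "square_integrable M (\<lambda>x. f x / c)"
  using square_integrable_scaleR_const[OF assms, of "1 / c"] by simp

end

context
  fixes M :: "'a measure" and F G H :: "'a \<Rightarrow> 'b::{real_inner, second_countable_topology}"
  assumes F: "square_integrable M F" and G: "square_integrable M G" and H: "square_integrable M H"
begin

lemma L2_inner_add_left: "L2_inner M (\<lambda>x. F x + G x) H = L2_inner M F H + L2_inner M G H"
  unfolding L2_inner_def using square_integrable_inner[OF F H] square_integrable_inner[OF G H]
  by (simp add: inner_add_left)

lemma L2_inner_diff_left: "L2_inner M (\<lambda>x. F x - G x) H = L2_inner M F H - L2_inner M G H"
  unfolding L2_inner_def using square_integrable_inner[OF F H] square_integrable_inner[OF G H]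
  by (simp add: inner_diff_left)

end

lemma L2_inner_scaleR_left: "L2_inner M (\<lambda>x. c *\<^sub>R F x) G = c * L2_inner M F G"
  by (simp add: L2_inner_def)

lemma L2_inner_commute: "L2_inner M F G = L2_inner M G F"
  by (simp add: L2_inner_def inner_commute)

lemma L2_inner_self_nonneg: "0 \<le> L2_inner M F F"
  unfolding L2_inner_def by (intro integral_nonneg_AE AE_I2) simp

lemma L2_norm_nonneg: "0 \<le> L2_norm M F"
  by (simp add: L2_norm_def L2_inner_self_nonneg)

lemma L2_norm_power2: "(L2_norm M F)\<^sup>2 = L2_inner M F F"
  by (simp add: L2_norm_def L2_inner_self_nonneg)

lemma quadratic_nonneg_imp_discriminant:
  fixes a b c :: real
  assumes "\<And>t. 0 \<le> a - 2 * t * b + t\<^sup>2 * c" "0 \<le> c"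
  shows "b\<^sup>2 \<le> a * c"
proof (cases "c = 0")
  case True
  show ?thesis
  proof (cases "b = 0")
    case False
    have "0 \<le> a - 2 * ((a + 1) / (2 * b)) * b" using assms(1)[of "(a + 1) / (2 * b)"] True by simp
    with False show ?thesis by (simp add: field_simps)
  qed (use True in simp)
next
  case False
  with assms(2) have "c > 0" by simp
  have "0 \<le> a - 2 * (b / c) * b + (b / c)\<^sup>2 * c" by (rule assms(1))
  also have "\<dots> = a - b\<^sup>2 / c" using \<open>c > 0\<close> by (simp add: field_simps power2_eq_square)
  finally show ?thesis using \<open>c > 0\<close> by (simp add: field_simps)
qed

lemma L2_inner_Cauchy_Schwarz:
  fixes F G :: "'a \<Rightarrow> 'b::{real_inner, second_countable_topology}"
  assumes F: "square_integrable M F" and G: "square_integrable M G"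
  shows "\<bar>L2_inner M F G\<bar> \<le> L2_norm M F * L2_norm M G"
proof -
  have "(L2_inner M F G)\<^sup>2 \<le> L2_inner M F F * L2_inner M G G"
  proof (rule quadratic_nonneg_imp_discriminant)
    fix t
    have tG: "square_integrable M (\<lambda>x. t *\<^sub>R G x)"
      by (rule square_integrable_scaleR_const[OF G])
    have FtG: "square_integrable M (\<lambda>x. F x - t *\<^sub>R G x)"
      by (rule square_integrable_diff[OF F tG])
    have "L2_inner M (\<lambda>x. F x - t *\<^sub>R G x) (\<lambda>x. F x - t *\<^sub>R G x)
        = L2_inner M F (\<lambda>x. F x - t *\<^sub>R G x) - t * L2_inner M G (\<lambda>x. F x - t *\<^sub>R G x)"
      by (simp add: L2_inner_diff_left[OF F tG FtG] L2_inner_scaleR_left)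
    also have "\<dots> = L2_inner M F F - 2 * t * L2_inner M F G + t\<^sup>2 * L2_inner M G G"
    proof -
      have FF: "L2_inner M F (\<lambda>x. F x - t *\<^sub>R G x) = L2_inner M F F - t * L2_inner M F G"
        using L2_inner_diff_left[OF F tG F]
        by (simp add: L2_inner_commute[of M F "\<lambda>x. F x - t *\<^sub>R G x"] L2_inner_commute[of M G F]
            L2_inner_scaleR_left)
      have GF: "L2_inner M G (\<lambda>x. F x - t *\<^sub>R G x) = L2_inner M F G - t * L2_inner M G G"
        using L2_inner_diff_left[OF F tG G]
        by (simp add: L2_inner_commute[of M G "\<lambda>x. F x - t *\<^sub>R G x"] L2_inner_commute[of M G F]
            L2_inner_scaleR_left)
      show ?thesis unfolding FF GF by (simp add: power2_eq_square algebra_simps)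
    qed
    finally have "L2_inner M (\<lambda>x. F x - t *\<^sub>R G x) (\<lambda>x. F x - t *\<^sub>R G x)
        = L2_inner M F F - 2 * t * L2_inner M F G + t\<^sup>2 * L2_inner M G G" .
    then show "0 \<le> L2_inner M F F - 2 * t * L2_inner M F G + t\<^sup>2 * L2_inner M G G"
      using L2_inner_self_nonneg[of M "\<lambda>x. F x - t *\<^sub>R G x"] by simp
  qed (rule L2_inner_self_nonneg)
  then show ?thesis
    unfolding L2_norm_def by (metis real_sqrt_abs real_sqrt_le_mono real_sqrt_mult)
qed

lemma L2_norm_diff_le:
  fixes F G :: "'a \<Rightarrow> 'b::{real_inner, second_countable_topology}"
  assumes F: "square_integrable M F" and G: "square_integrable M G"
  shows "L2_norm M (\<lambda>x. F x - G x) \<le> L2_norm M F + L2_norm M G"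
proof (rule power2_le_imp_le)
  have FG: "square_integrable M (\<lambda>x. F x - G x)" by (rule square_integrable_diff[OF F G])
  have "(L2_norm M (\<lambda>x. F x - G x))\<^sup>2 = L2_inner M F F - 2 * L2_inner M F G + L2_inner M G G"
    unfolding L2_norm_power2 L2_inner_diff_left[OF F G FG]
    by (simp add: L2_inner_commute[of M _ "\<lambda>x. F x - G x"] L2_inner_diff_left[OF F G F]
        L2_inner_diff_left[OF F G G] L2_inner_commute[of M G F])
  also have "\<dots> \<le> (L2_norm M F)\<^sup>2 + 2 * (L2_norm M F * L2_norm M G) + (L2_norm M G)\<^sup>2"
    using L2_inner_Cauchy_Schwarz[OF F G] by (simp add: L2_norm_power2)
  also have "\<dots> = (L2_norm M F + L2_norm M G)\<^sup>2"
    by (simp add: power2_sum)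
  finally show "(L2_norm M (\<lambda>x. F x - G x))\<^sup>2 \<le> (L2_norm M F + L2_norm M G)\<^sup>2" .
qed (simp add: L2_norm_nonneg)

lemma square_integrable_continuous_on_closure:
  fixes F :: "'a::euclidean_space \<Rightarrow> 'b::euclidean_space"
  assumes S: "bounded S" "S \<in> sets lebesgue" and F: "continuous_on (closure S) F"
  shows "square_integrable (lebesgue_on S) F"
proof -
  have "compact (F ` closure S)"
    using S F by (intro compact_continuous_image) (auto simp: compact_closure)
  then obtain B where B: "\<And>x. x \<in> closure S \<Longrightarrow> norm (F x) \<le> B"
    by (meson bounded_iff compact_imp_bounded image_eqI)
  have meas: "F \<in> borel_measurable (lebesgue_on S)"
    using F S by (intro continuous_imp_measurable_on_sets_lebesgue continuous_on_subset[OF F])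
      (auto simp: closure_subset)
  interpret finite_measure "lebesgue_on S"
    using S by (intro finite_measure_lebesgue_on bounded_set_imp_lmeasurable)
  have "integrable (lebesgue_on S) (\<lambda>x. (norm (F x))\<^sup>2)"
  proof (rule Bochner_Integration.integrable_bound)
    show "integrable (lebesgue_on S) (\<lambda>x. B\<^sup>2)" by simp
    show "AE x in lebesgue_on S. norm ((norm (F x))\<^sup>2) \<le> norm (B\<^sup>2)"
    proof (rule AE_I2)
      fix x assume "x \<in> space (lebesgue_on S)"
      then have "norm (F x) \<le> B" using B closure_subset by auto
      then have "(norm (F x))\<^sup>2 \<le> B\<^sup>2" by (intro power_mono) auto
      then show "norm ((norm (F x))\<^sup>2) \<le> norm (B\<^sup>2)" by simp
    qed
  qed (use meas in measurable)
  with meas show ?thesis by (simp add: square_integrable_def)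
qed

lemma borel_measurable_lebesgue_on_AE_cong:
  fixes f g :: "'a::euclidean_space \<Rightarrow> 'b::euclidean_space"
  assumes S: "S \<in> sets lebesgue" and f: "f \<in> borel_measurable (lebesgue_on S)"
    and fg: "AE x in lebesgue_on S. f x = g x"
  shows "g \<in> borel_measurable (lebesgue_on S)"
proof -
  have "(\<lambda>x. indicator S x *\<^sub>R f x) \<in> borel_measurable lebesgue"
    using f S by (simp add: borel_measurable_restrict_space_iff)
  moreover have "AE x in lebesgue. indicator S x *\<^sub>R f x = indicator S x *\<^sub>R g x"
  proof -
    have "AE x in lebesgue. x \<in> S \<longrightarrow> f x = g x"
      using fg S by (simp add: AE_restrict_space_iff)
    then show ?thesis by eventually_elim (auto simp: indicator_def)
  qed
  ultimately have "(\<lambda>x. indicator S x *\<^sub>R g x) \<in> borel_measurable lebesgue"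
    by (rule borel_measurable_AE)
  then show ?thesis using S by (simp add: borel_measurable_restrict_space_iff)
qed

lemma square_integrable_lebesgue_on_AE_cong:
  fixes f g :: "'a::euclidean_space \<Rightarrow> 'b::euclidean_space"
  assumes S: "S \<in> sets lebesgue" and f: "square_integrable (lebesgue_on S) f"
    and fg: "AE x in lebesgue_on S. f x = g x"
  shows "square_integrable (lebesgue_on S) g"
proof -
  have mf: "f \<in> borel_measurable (lebesgue_on S)" using f by (simp add: square_integrable_def)
  have mg: "g \<in> borel_measurable (lebesgue_on S)"
    by (rule borel_measurable_lebesgue_on_AE_cong[OF S mf fg])
  have "integrable (lebesgue_on S) (\<lambda>x. (norm (f x))\<^sup>2) \<longleftrightarrow> integrable (lebesgue_on S) (\<lambda>x. (norm (g x))\<^sup>2)"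
    using mf mg fg by (intro integrable_cong_AE) (auto elim: AE_mp)
  with f mg show ?thesis by (simp add: square_integrable_def)
qed

lemma L2_inner_cong_AE:
  fixes F G H :: "'a \<Rightarrow> 'b::{real_inner, second_countable_topology}"
  assumes "AE x in M. F x = G x" "F \<in> borel_measurable M" "G \<in> borel_measurable M"
    "H \<in> borel_measurable M"
  shows "L2_inner M F H = L2_inner M G H"
  unfolding L2_inner_def using assms by (intro integral_cong_AE) (auto elim: AE_mp)

lemma L2_inner_tendsto_right:
  fixes F G :: "'a \<Rightarrow> 'b::{real_inner, second_countable_topology}"
  assumes F: "square_integrable M F" and G: "square_integrable M G"
    and Gs: "\<And>k. square_integrable M (Gs k)"
    and lim: "(\<lambda>k. L2_norm M (\<lambda>x. G x - Gs k x)) \<longlonglongrightarrow> 0"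
  shows "(\<lambda>k. L2_inner M F (Gs k)) \<longlonglongrightarrow> L2_inner M F G"
proof -
  have "(\<lambda>k. L2_inner M F G - L2_inner M F (Gs k)) \<longlonglongrightarrow> 0"
  proof (rule Lim_null_comparison)
    have "L2_inner M F G - L2_inner M F (Gs k) = L2_inner M (\<lambda>x. G x - Gs k x) F" for k
      using L2_inner_diff_left[OF G Gs F]
      by (simp add: L2_inner_commute[of M G F] L2_inner_commute[of M "Gs k" F])
    then show "\<forall>\<^sub>F k in sequentially. norm (L2_inner M F G - L2_inner M F (Gs k))
        \<le> L2_norm M F * L2_norm M (\<lambda>x. G x - Gs k x)"
      using L2_inner_Cauchy_Schwarz[OF square_integrable_diff[OF G Gs] F] by (simp add: mult.commute)
    show "(\<lambda>k. L2_norm M F * L2_norm M (\<lambda>x. G x - Gs k x)) \<longlonglongrightarrow> 0"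
      using tendsto_mult_left[OF lim] by simp
  qed
  from tendsto_diff[OF tendsto_const this, of "L2_inner M F G"] show ?thesis by simp
qed

lemma L2_norm_diff_diff_tendsto_zero:
  fixes F G :: "'a \<Rightarrow> 'b::{real_inner, second_countable_topology}"
  assumes F: "square_integrable M F" "\<And>k. square_integrable M (Fs k)"
    and G: "square_integrable M G" "\<And>k. square_integrable M (Gs k)"
    and limF: "(\<lambda>k. L2_norm M (\<lambda>x. F x - Fs k x)) \<longlonglongrightarrow> 0"
    and limG: "(\<lambda>k. L2_norm M (\<lambda>x. G x - Gs k x)) \<longlonglongrightarrow> 0"
  shows "(\<lambda>k. L2_norm M (\<lambda>x. (F x - G x) - (Fs k x - Gs k x))) \<longlonglongrightarrow> 0"
proof (rule tendsto_sandwich[OF _ _ tendsto_const])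
  show "\<forall>\<^sub>F k in sequentially. L2_norm M (\<lambda>x. (F x - G x) - (Fs k x - Gs k x))
      \<le> L2_norm M (\<lambda>x. F x - Fs k x) + L2_norm M (\<lambda>x. G x - Gs k x)"
    using L2_norm_diff_le[OF square_integrable_diff[OF F] square_integrable_diff[OF G]]
    by (simp add: algebra_simps)
  show "(\<lambda>k. L2_norm M (\<lambda>x. F x - Fs k x) + L2_norm M (\<lambda>x. G x - Gs k x)) \<longlonglongrightarrow> 0"
    using tendsto_add[OF limF limG] by simp
qed (simp add: L2_norm_nonneg)

section \<open>Test functions and \<open>H\<^sub>0\<^sup>1\<close>\<close>

lemma partial_fun_diff:
  assumes "\<And>x. f differentiable (at x)" "\<And>x. g differentiable (at x)"
  shows "partial_fun i (\<lambda>x. f x - g x) = (\<lambda>x. partial_fun i f x - partial_fun i g x)"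
proof
  fix x
  have "((\<lambda>x. f x - g x) has_derivative
      (\<lambda>h. frechet_derivative f (at x) h - frechet_derivative g (at x) h)) (at x)"
    using assms by (intro has_derivative_diff) (simp_all add: frechet_derivative_works)
  then have "frechet_derivative (\<lambda>x. f x - g x) (at x)
      = (\<lambda>h. frechet_derivative f (at x) h - frechet_derivative g (at x) h)"
    by (rule frechet_derivative_at[symmetric])
  then show "partial_fun i (\<lambda>x. f x - g x) x = partial_fun i f x - partial_fun i g x"
    by (simp add: partial_fun_def)
qed

lemma foldr_partial_fun_diff:
  assumes "Cinf f" "Cinf g"
  shows "foldr partial_fun is (\<lambda>x. f x - g x) = (\<lambda>x. foldr partial_fun is f x - foldr partial_fun is g x)"
proof (induction "is")
  case (Cons i "is")
  have "\<And>x. foldr partial_fun is f differentiable (at x)" "\<And>x. foldr partial_fun is g differentiable (at x)"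
    using assms by (simp_all add: Cinf_def)
  then show ?case
    using Cons.IH by (simp add: partial_fun_diff)
qed simp

lemma Cinf_diff:
  assumes "Cinf f" "Cinf g"
  shows "Cinf (\<lambda>x. f x - g x)"
  unfolding Cinf_def foldr_partial_fun_diff[OF assms]
proof
  fix "is" :: "'a list"
  show "continuous_on UNIV (\<lambda>x. foldr partial_fun is f x - foldr partial_fun is g x) \<and>
      (\<forall>x. (\<lambda>x. foldr partial_fun is f x - foldr partial_fun is g x) differentiable (at x))"
    using assms unfolding Cinf_def by (blast intro: continuous_on_diff differentiable_diff)
qed

lemma cgrad_diff:
  assumes "Cinf f" "Cinf g"
  shows "cgrad (\<lambda>x. f x - g x) x = cgrad f x - cgrad g x"
  using foldr_partial_fun_diff[OF assms, of "[i]" for i] by (simp add: cgrad_def vec_eq_iff)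

lemma test_fun_diff:
  assumes f: "test_fun \<Omega> f" and g: "test_fun \<Omega> g"
  shows "test_fun \<Omega> (\<lambda>x. f x - g x)"
proof -
  let ?K = "closure {x. f x \<noteq> 0} \<union> closure {x. g x \<noteq> 0}"
  have "{x. f x - g x \<noteq> 0} \<subseteq> {x. f x \<noteq> 0} \<union> {x. g x \<noteq> 0}" by auto
  then have supp: "closure {x. f x - g x \<noteq> 0} \<subseteq> ?K"
    unfolding closure_Un[symmetric] by (rule closure_mono)
  have "compact (?K \<inter> closure {x. f x - g x \<noteq> 0})"
    using f g by (intro compact_Int_closed) (simp_all add: test_fun_def compact_Un)
  moreover have "?K \<inter> closure {x. f x - g x \<noteq> 0} = closure {x. f x - g x \<noteq> 0}"
    using supp by blast
  ultimately have "compact (closure {x. f x - g x \<noteq> 0})" by simp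
  with supp f g show ?thesis by (auto simp: test_fun_def intro: Cinf_diff)
qed

lemma Cinf_continuous_on: "Cinf f \<Longrightarrow> continuous_on UNIV f"
  unfolding Cinf_def by (metis foldr_Nil id_apply)

lemma Cinf_cgrad_continuous_on: "Cinf f \<Longrightarrow> continuous_on UNIV (cgrad f)"
  unfolding cgrad_def Cinf_def
  by (intro continuous_on_vec_lambda) (metis foldr_Cons foldr_Nil id_apply comp_apply)

lemma test_fun_square_integrable:
  assumes \<Omega>: "bounded \<Omega>" "\<Omega> \<in> sets lebesgue" and \<phi>: "test_fun \<Omega> \<phi>"
  shows "square_integrable (lebesgue_on \<Omega>) \<phi>" "square_integrable (lebesgue_on \<Omega>) (cgrad \<phi>)"
  using \<phi> by (auto simp: test_fun_def intro!: square_integrable_continuous_on_closure[OF \<Omega>]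
      continuous_on_subset[OF Cinf_continuous_on] continuous_on_subset[OF Cinf_cgrad_continuous_on])

lemma H1_square_integrable:
  assumes "H1 \<Omega> u G"
  shows "square_integrable (lebesgue_on \<Omega>) u" "square_integrable (lebesgue_on \<Omega>) G"
  using assms by (simp_all add: H1_def L2_iff_square_integrable L2v_iff_square_integrable)

lemma weak_grad_diff:
  assumes \<Omega>: "bounded \<Omega>" "\<Omega> \<in> sets lebesgue" and u: "H1 \<Omega> u G" and v: "H1 \<Omega> v H"
  shows "weak_grad \<Omega> (\<lambda>x. u x - v x) (\<lambda>x. G x - H x)"
  unfolding weak_grad_def
proof (intro allI impI)
  fix \<phi> assume \<phi>: "test_fun \<Omega> \<phi>"
  note sq = H1_square_integrable[OF u] H1_square_integrable[OF v] test_fun_square_integrable[OF \<Omega> \<phi>]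
  have "(\<integral>x. (u x - v x) *\<^sub>R cgrad \<phi> x \<partial>lebesgue_on \<Omega>)
      = (\<integral>x. u x *\<^sub>R cgrad \<phi> x \<partial>lebesgue_on \<Omega>) - (\<integral>x. v x *\<^sub>R cgrad \<phi> x \<partial>lebesgue_on \<Omega>)"
    using square_integrable_scaleR[OF sq(1) sq(6)] square_integrable_scaleR[OF sq(3) sq(6)]
    by (simp add: scaleR_diff_left)
  also have "\<dots> = (\<integral>x. \<phi> x *\<^sub>R H x \<partial>lebesgue_on \<Omega>) - (\<integral>x. \<phi> x *\<^sub>R G x \<partial>lebesgue_on \<Omega>)"
    using u v \<phi> by (simp add: H1_def weak_grad_def)
  also have "\<dots> = - (\<integral>x. \<phi> x *\<^sub>R (G x - H x) \<partial>lebesgue_on \<Omega>)"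
    using square_integrable_scaleR[OF sq(5) sq(2)] square_integrable_scaleR[OF sq(5) sq(4)]
    by (simp add: scaleR_diff_right)
  finally show "(\<integral>x. (u x - v x) *\<^sub>R cgrad \<phi> x \<partial>lebesgue_on \<Omega>)
      = - (\<integral>x. \<phi> x *\<^sub>R (G x - H x) \<partial>lebesgue_on \<Omega>)" .
qed

lemma H01_approximation:
  assumes "H01 \<Omega> u G"
  obtains \<phi>s where "\<And>k. test_fun \<Omega> (\<phi>s k)"
    "(\<lambda>k. L2_norm (lebesgue_on \<Omega>) (\<lambda>x. u x - \<phi>s k x)) \<longlonglongrightarrow> 0"
    "(\<lambda>k. L2_norm (lebesgue_on \<Omega>) (\<lambda>x. G x - cgrad (\<phi>s k) x)) \<longlonglongrightarrow> 0"
proof -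
  let ?M = "lebesgue_on \<Omega>"
  obtain \<phi>s where \<phi>s: "\<And>k. test_fun \<Omega> (\<phi>s k)"
    "(\<lambda>k. (L2_norm ?M (\<lambda>x. u x - \<phi>s k x))\<^sup>2 + (L2_norm ?M (\<lambda>x. G x - cgrad (\<phi>s k) x))\<^sup>2) \<longlonglongrightarrow> 0"
    using assms unfolding H01_def nrm_eq_L2_norm nrmv_eq_L2_norm by blast
  have "(\<lambda>k. (L2_norm ?M (\<lambda>x. u x - \<phi>s k x))\<^sup>2) \<longlonglongrightarrow> 0"
    by (rule tendsto_sandwich[OF _ _ tendsto_const \<phi>s(2)]) auto
  moreover have "(\<lambda>k. (L2_norm ?M (\<lambda>x. G x - cgrad (\<phi>s k) x))\<^sup>2) \<longlonglongrightarrow> 0"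
    by (rule tendsto_sandwich[OF _ _ tendsto_const \<phi>s(2)]) auto
  ultimately have "(\<lambda>k. L2_norm ?M (\<lambda>x. u x - \<phi>s k x)) \<longlonglongrightarrow> 0"
    "(\<lambda>k. L2_norm ?M (\<lambda>x. G x - cgrad (\<phi>s k) x)) \<longlonglongrightarrow> 0"
    using tendsto_real_sqrt by (force simp: L2_norm_nonneg)+
  with \<phi>s(1) show ?thesis by (rule that)
qed

lemma H01_diff:
  assumes \<Omega>: "bounded \<Omega>" "\<Omega> \<in> sets lebesgue" and u: "H01 \<Omega> u G" and v: "H01 \<Omega> v H"
  shows "H01 \<Omega> (\<lambda>x. u x - v x) (\<lambda>x. G x - H x)"
proof -
  let ?M = "lebesgue_on \<Omega>"
  have H1: "H1 \<Omega> u G" "H1 \<Omega> v H" using u v by (simp_all add: H01_def)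
  note sq = H1_square_integrable[OF H1(1)] H1_square_integrable[OF H1(2)]
  obtain \<phi>s where \<phi>s: "\<And>k. test_fun \<Omega> (\<phi>s k)"
    "(\<lambda>k. L2_norm ?M (\<lambda>x. u x - \<phi>s k x)) \<longlonglongrightarrow> 0"
    "(\<lambda>k. L2_norm ?M (\<lambda>x. G x - cgrad (\<phi>s k) x)) \<longlonglongrightarrow> 0"
    using H01_approximation[OF u] by blast
  obtain \<chi>s where \<chi>s: "\<And>k. test_fun \<Omega> (\<chi>s k)"
    "(\<lambda>k. L2_norm ?M (\<lambda>x. v x - \<chi>s k x)) \<longlonglongrightarrow> 0"
    "(\<lambda>k. L2_norm ?M (\<lambda>x. H x - cgrad (\<chi>s k) x)) \<longlonglongrightarrow> 0"
    using H01_approximation[OF v] by blast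
  define \<psi>s where "\<psi>s k x = \<phi>s k x - \<chi>s k x" for k x
  have \<psi>s: "test_fun \<Omega> (\<psi>s k)" for k
    unfolding \<psi>s_def by (intro test_fun_diff \<phi>s(1) \<chi>s(1))
  have grad_\<psi>s: "cgrad (\<psi>s k) x = cgrad (\<phi>s k) x - cgrad (\<chi>s k) x" for k x
    using \<phi>s(1) \<chi>s(1) unfolding \<psi>s_def test_fun_def by (intro cgrad_diff) auto
  note sq_\<phi>s = test_fun_square_integrable[OF \<Omega> \<phi>s(1)]
  note sq_\<chi>s = test_fun_square_integrable[OF \<Omega> \<chi>s(1)]
  have "(\<lambda>k. L2_norm ?M (\<lambda>x. (u x - v x) - \<psi>s k x)) \<longlonglongrightarrow> 0"
    using L2_norm_diff_diff_tendsto_zero[OF sq(1) sq_\<phi>s(1) sq(3) sq_\<chi>s(1) \<phi>s(2) \<chi>s(2)]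
    by (simp add: \<psi>s_def)
  moreover have "(\<lambda>k. L2_norm ?M (\<lambda>x. (G x - H x) - cgrad (\<psi>s k) x)) \<longlonglongrightarrow> 0"
    using L2_norm_diff_diff_tendsto_zero[OF sq(2) sq_\<phi>s(2) sq(4) sq_\<chi>s(2) \<phi>s(3) \<chi>s(3)]
    by (simp add: grad_\<psi>s)
  ultimately have "(\<lambda>k. (nrm \<Omega> (\<lambda>x. (u x - v x) - \<psi>s k x))\<^sup>2
      + (nrmv \<Omega> (\<lambda>x. (G x - H x) - cgrad (\<psi>s k) x))\<^sup>2) \<longlonglongrightarrow> 0"
    unfolding nrm_eq_L2_norm nrmv_eq_L2_norm by (auto dest: tendsto_power[where n = 2] intro: tendsto_add_zero)
  moreover have "H1 \<Omega> (\<lambda>x. u x - v x) (\<lambda>x. G x - H x)"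
    using sq weak_grad_diff[OF \<Omega> H1]
    by (simp add: H1_def L2_iff_square_integrable L2v_iff_square_integrable square_integrable_diff)
  ultimately show ?thesis unfolding H01_def using \<psi>s by blast
qed

lemma weak_div_integration_by_parts:
  assumes \<Omega>: "bounded \<Omega>" "\<Omega> \<in> sets lebesgue"
    and w: "square_integrable (lebesgue_on \<Omega>) w" and D: "square_integrable (lebesgue_on \<Omega>) D"
    and div: "weak_div \<Omega> w D" and \<psi>: "H01 \<Omega> \<psi> G"
  shows "L2_inner (lebesgue_on \<Omega>) w G = - L2_inner (lebesgue_on \<Omega>) D \<psi>"
proof -
  obtain \<phi>s where \<phi>s: "\<And>k. test_fun \<Omega> (\<phi>s k)"
    "(\<lambda>k. L2_norm (lebesgue_on \<Omega>) (\<lambda>x. \<psi> x - \<phi>s k x)) \<longlonglongrightarrow> 0"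
    "(\<lambda>k. L2_norm (lebesgue_on \<Omega>) (\<lambda>x. G x - cgrad (\<phi>s k) x)) \<longlonglongrightarrow> 0"
    using H01_approximation[OF \<psi>] by blast
  note sq = H1_square_integrable[of \<Omega> \<psi> G] test_fun_square_integrable[OF \<Omega> \<phi>s(1)]
  have "(\<lambda>k. L2_inner (lebesgue_on \<Omega>) w (cgrad (\<phi>s k))) \<longlonglongrightarrow> L2_inner (lebesgue_on \<Omega>) w G"
    using \<psi> sq by (intro L2_inner_tendsto_right[OF w _ _ \<phi>s(3)]) (auto simp: H01_def)
  moreover have "(\<lambda>k. L2_inner (lebesgue_on \<Omega>) D (\<phi>s k)) \<longlonglongrightarrow> L2_inner (lebesgue_on \<Omega>) D \<psi>"
    using \<psi> sq by (intro L2_inner_tendsto_right[OF D _ _ \<phi>s(2)]) (auto simp: H01_def)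
  moreover have "L2_inner (lebesgue_on \<Omega>) w (cgrad (\<phi>s k)) = - L2_inner (lebesgue_on \<Omega>) D (\<phi>s k)" for k
    using div \<phi>s(1) by (simp add: weak_div_def L2_inner_def)
  ultimately have "(\<lambda>k. L2_inner (lebesgue_on \<Omega>) w (cgrad (\<phi>s k))) \<longlonglongrightarrow> - L2_inner (lebesgue_on \<Omega>) D \<psi>"
    by (simp add: tendsto_minus_cancel_left)
  with \<open>(\<lambda>k. L2_inner (lebesgue_on \<Omega>) w (cgrad (\<phi>s k))) \<longlonglongrightarrow> L2_inner (lebesgue_on \<Omega>) w G\<close>
  show ?thesis by (rule LIMSEQ_unique)
qed

lemma weak_div_pairing_eq:
  assumes \<Omega>: "bounded \<Omega>" "\<Omega> \<in> sets lebesgue" and \<tau>: "\<tau> \<noteq> 0"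
    and w: "square_integrable (lebesgue_on \<Omega>) w" and r: "square_integrable (lebesgue_on \<Omega>) r"
    and div: "weak_div \<Omega> w D" and D: "AE x in lebesgue_on \<Omega>. \<tau> * D x = r x"
    and \<psi>: "H01 \<Omega> \<psi> G"
  shows "\<tau> * L2_inner (lebesgue_on \<Omega>) w G = - L2_inner (lebesgue_on \<Omega>) r \<psi>"
proof -
  let ?M = "lebesgue_on \<Omega>"
  have rD: "AE x in ?M. r x / \<tau> = D x"
    using D by eventually_elim (use \<tau> in \<open>auto simp: field_simps\<close>)
  have r\<tau>: "square_integrable ?M (\<lambda>x. r x / \<tau>)"
    by (rule square_integrable_divide_const[OF r])
  then have "square_integrable ?M D"
    by (rule square_integrable_lebesgue_on_AE_cong[OF \<Omega>(2) _ rD])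
  then have "L2_inner ?M w G = - L2_inner ?M D \<psi>"
    by (rule weak_div_integration_by_parts[OF \<Omega> w _ div \<psi>])
  also have "L2_inner ?M D \<psi> = L2_inner ?M (\<lambda>x. r x / \<tau>) \<psi>"
    using rD r\<tau> \<open>square_integrable ?M D\<close> H1_square_integrable(1)[of \<Omega> \<psi> G] \<psi>
    by (intro L2_inner_cong_AE) (auto simp: square_integrable_def H01_def elim: AE_mp)
  also have "\<dots> = L2_inner ?M r \<psi> / \<tau>"
    by (simp add: L2_inner_def)
  finally show ?thesis using \<tau> by simp
qed

section \<open>The energy identity and the estimate\<close>

lemma error_energy_identity:
  fixes \<phi> \<phi>h p ph P\<phi>h g :: "'a \<Rightarrow> real" and G\<phi> G\<phi>h w :: "'a \<Rightarrow> 'b::{real_inner, second_countable_topology}"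
  defines "e \<equiv> \<lambda>x. \<phi> x - \<phi>h x" and "E \<equiv> \<lambda>x. G\<phi> x - G\<phi>h x"
  assumes sq: "square_integrable M \<phi>" "square_integrable M \<phi>h" "square_integrable M p"
    "square_integrable M ph" "square_integrable M P\<phi>h" "square_integrable M g"
    "square_integrable M G\<phi>" "square_integrable M G\<phi>h" "square_integrable M w"
    and exact: "(1 / lam) * L2_inner M (\<lambda>x. \<phi> x - p x) e + \<tau> * L2_inner M G\<phi> E = L2_inner M g e"
    and flux: "\<tau> * L2_inner M w E = - L2_inner M (\<lambda>x. g x + (ph x - P\<phi>h x) / lam) e"
  shows "\<tau> * (L2_norm M E)\<^sup>2 + L2_inner M (\<lambda>x. \<phi> x - \<phi>h x - (p x - ph x)) e / lam
    = - \<tau> * L2_inner M (\<lambda>x. w x + G\<phi>h x) E - L2_inner M (\<lambda>x. \<phi>h x - P\<phi>h x) e / lam"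
proof -
  note diff = square_integrable_diff
  have e: "square_integrable M e" and E: "square_integrable M E"
    unfolding e_def E_def using sq by (auto intro: diff)
  have "(\<lambda>x. \<phi> x - \<phi>h x - (p x - ph x)) = (\<lambda>x. (\<phi> x - p x) - (\<phi>h x - ph x))"
    by (simp add: algebra_simps)
  then have defect: "L2_inner M (\<lambda>x. \<phi> x - \<phi>h x - (p x - ph x)) e
      = L2_inner M (\<lambda>x. \<phi> x - p x) e - L2_inner M \<phi>h e + L2_inner M ph e"
    using sq e by (simp add: L2_inner_diff_left diff)
  have Ph: "square_integrable M (\<lambda>x. ph x - P\<phi>h x)" using sq by (intro diff)
  have "L2_inner M (\<lambda>x. g x + (ph x - P\<phi>h x) / lam) e
      = L2_inner M g e + L2_inner M (\<lambda>x. (1 / lam) *\<^sub>R (ph x - P\<phi>h x)) e"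
    using L2_inner_add_left[OF sq(6) square_integrable_scaleR_const[OF Ph, of "1 / lam"] e] by simp
  also have "\<dots> = L2_inner M g e + (L2_inner M ph e - L2_inner M P\<phi>h e) / lam"
    unfolding L2_inner_scaleR_left L2_inner_diff_left[OF sq(4,5) e] by simp
  finally have flux': "\<tau> * L2_inner M w E = - L2_inner M g e - (L2_inner M ph e - L2_inner M P\<phi>h e) / lam"
    using flux by simp
  have energy: "(L2_norm M E)\<^sup>2 = L2_inner M G\<phi> E - L2_inner M G\<phi>h E"
    unfolding L2_norm_power2 using L2_inner_diff_left[OF sq(7,8) E] by (simp add: E_def)
  have residual: "L2_inner M (\<lambda>x. w x + G\<phi>h x) E = L2_inner M w E + L2_inner M G\<phi>h E"
    using sq E by (simp add: L2_inner_add_left)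
  have oscillation: "L2_inner M (\<lambda>x. \<phi>h x - P\<phi>h x) e = L2_inner M \<phi>h e - L2_inner M P\<phi>h e"
    using sq e by (simp add: L2_inner_diff_left)
  have exact': "\<tau> * L2_inner M G\<phi> E = L2_inner M g e - L2_inner M (\<lambda>x. \<phi> x - p x) e / lam"
    using exact by simp
  show ?thesis
    unfolding energy residual oscillation defect
    using exact' flux' by (simp add: ring_distribs diff_divide_distrib add_divide_distrib)
qed

lemma energy_identity_imp_estimate:
  fixes \<tau> lam C X Y W Z a b E :: real
  assumes \<tau>: "\<tau> > 0" and lam: "lam > 0"
    and identity: "\<tau> * X\<^sup>2 + Y / lam = - \<tau> * W - Z / lam"
    and W: "\<bar>W\<bar> \<le> a * X" and Z: "\<bar>Z\<bar> \<le> b * E" and E: "E \<le> C * X" and b: "0 \<le> b"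
  shows "3/4 * \<tau> * X\<^sup>2 + (2 / lam) * Y \<le> (sqrt \<tau> * a)\<^sup>2 + 4 * C\<^sup>2 * (1 / (lam * sqrt \<tau>) * b)\<^sup>2"
proof -
  have "- \<tau> * W \<le> \<tau> * (a * X)"
    using mult_left_mono[of "- W" "a * X" \<tau>] W \<tau> by (simp add: abs_le_iff)
  also have "\<dots> \<le> \<tau> * X\<^sup>2 / 2 + \<tau> * a\<^sup>2 / 2"
    using mult_left_mono[OF sum_squares_bound[of X a], of \<tau>] \<tau> by (simp add: algebra_simps)
  finally have young_W: "- \<tau> * W \<le> \<tau> * X\<^sup>2 / 2 + \<tau> * a\<^sup>2 / 2" .
  have "- Z \<le> C * b * X"
    using Z mult_left_mono[OF E b] by (simp add: abs_le_iff algebra_simps)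
  then have "- Z / lam \<le> C * b * X / lam"
    using divide_right_mono[of "- Z" "C * b * X" lam] lam by simp
  also have "\<dots> \<le> \<tau> * X\<^sup>2 / 8 + 2 * C\<^sup>2 * b\<^sup>2 / (lam\<^sup>2 * \<tau>)"
  proof -
    have "8 * (lam * \<tau> * X) * (C * b) \<le> (lam * \<tau> * X)\<^sup>2 + 16 * (C * b)\<^sup>2"
      using sum_squares_bound[of "lam * \<tau> * X" "4 * C * b"] by (simp add: power_mult_distrib)
    then have "8 * (lam * \<tau> * X) * (C * b) / (8 * lam\<^sup>2 * \<tau>)
        \<le> ((lam * \<tau> * X)\<^sup>2 + 16 * (C * b)\<^sup>2) / (8 * lam\<^sup>2 * \<tau>)"
      using \<tau> lam by (intro divide_right_mono) auto
    then show ?thesis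
      using \<tau> lam by (simp add: power2_eq_square field_simps)
  qed
  finally have young_Z: "- Z / lam \<le> \<tau> * X\<^sup>2 / 8 + 2 * C\<^sup>2 * b\<^sup>2 / (lam\<^sup>2 * \<tau>)" .
  have "(sqrt \<tau> * a)\<^sup>2 + 4 * C\<^sup>2 * (1 / (lam * sqrt \<tau>) * b)\<^sup>2 = \<tau> * a\<^sup>2 + 4 * C\<^sup>2 * b\<^sup>2 / (lam\<^sup>2 * \<tau>)"
    using \<tau> by (simp add: power_mult_distrib power_divide)
  then show ?thesis
    using identity young_W young_Z by simp
qed

lemma energy_identity_imp_L2_estimate:
  fixes e Q D :: "'a \<Rightarrow> 'c::{real_inner, second_countable_topology}"
    and E R :: "'a \<Rightarrow> 'b::{real_inner, second_countable_topology}"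
  assumes sq: "square_integrable M e" "square_integrable M Q" "square_integrable M E" "square_integrable M R"
    and \<tau>: "\<tau> > 0" and lam: "lam > 0"
    and identity: "\<tau> * (L2_norm M E)\<^sup>2 + L2_inner M D e / lam
      = - \<tau> * L2_inner M R E - L2_inner M Q e / lam"
    and friedrichs: "L2_norm M e \<le> C * L2_norm M E"
  shows "3/4 * \<tau> * (L2_norm M E)\<^sup>2 + (2 / lam) * L2_inner M D e
    \<le> (sqrt \<tau> * L2_norm M R)\<^sup>2 + 4 * C\<^sup>2 * (1 / (lam * sqrt \<tau>) * L2_norm M Q)\<^sup>2"
  using L2_inner_Cauchy_Schwarz[OF sq(4,3)] L2_inner_Cauchy_Schwarz[OF sq(2,1)]
  by (intro energy_identity_imp_estimate[OF \<tau> lam identity _ _ friedrichs L2_norm_nonneg])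

theorem lemma3p2:
  fixes \<Omega> :: "(real^'n) set" and \<T> :: "(real^'n) set set"
    and \<mu> lam \<tau> C\<^sub>F :: real
    and f :: "real^'n \<Rightarrow> real^'n" and g :: "real^'n \<Rightarrow> real"
    and u :: "real^'n \<Rightarrow> real^'n" and Du :: "real^'n \<Rightarrow> real^'n^'n"
    and p \<phi> :: "real^'n \<Rightarrow> real" and G\<phi> :: "real^'n \<Rightarrow> real^'n"
    and uh :: "real^'n \<Rightarrow> real^'n" and Duh :: "real^'n \<Rightarrow> real^'n^'n"
    and ph \<phi>h P\<phi>h :: "real^'n \<Rightarrow> real" and G\<phi>h :: "real^'n \<Rightarrow> real^'n"
    and w :: "real^'n \<Rightarrow> real^'n" and Dw :: "real^'n \<Rightarrow> real"
  assumes dim: "CARD('n) = 2 \<or> CARD('n) = 3"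
    and dom: "lipschitz_domain \<Omega>"
    and mesh: "conforming_triangulation \<Omega> \<T>"
    and params: "\<mu> > 0" "lam > 0" "\<tau> > 0"
    and data: "L2v \<Omega> f" "L2 \<Omega> g"
    and exact_spaces: "H01v \<Omega> u Du" "L2 \<Omega> p" "H01 \<Omega> \<phi> G\<phi>"
    and eq1: "\<And>v Dv. H01v \<Omega> v Dv \<Longrightarrow>
        2 * \<mu> * ipm \<Omega> (\<lambda>x. symgrad (Du x)) (\<lambda>x. symgrad (Dv x)) - ip \<Omega> p (\<lambda>x. divj (Dv x))
          = ipv \<Omega> f v"
    and eq2: "\<And>q. L2 \<Omega> q \<Longrightarrow>
        ip \<Omega> (\<lambda>x. divj (Du x)) q + (1 / lam) * ip \<Omega> (\<lambda>x. p x - \<phi> x) q = 0"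
    and eq3: "\<And>\<psi> G\<psi>. H01 \<Omega> \<psi> G\<psi> \<Longrightarrow>
        (1 / lam) * ip \<Omega> (\<lambda>x. \<phi> x - p x) \<psi> + \<tau> * ipv \<Omega> G\<phi> G\<psi> = ip \<Omega> g \<psi>"
    and discrete_spaces: "Vh \<Omega> \<T> uh Duh" "ph \<in> Qh \<Omega> \<T>" "Sh \<Omega> \<T> \<phi>h G\<phi>h"
    and eq1h: "\<And>v Dv. Vh \<Omega> \<T> v Dv \<Longrightarrow>
        2 * \<mu> * ipm \<Omega> (\<lambda>x. symgrad (Duh x)) (\<lambda>x. symgrad (Dv x)) - ip \<Omega> ph (\<lambda>x. divj (Dv x))
          = ipv \<Omega> f v"
    and eq2h: "\<And>q. q \<in> Qh \<Omega> \<T> \<Longrightarrow>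
        ip \<Omega> (\<lambda>x. divj (Duh x)) q + (1 / lam) * ip \<Omega> (\<lambda>x. ph x - \<phi>h x) q = 0"
    and eq3h: "\<And>\<psi> G\<psi>. Sh \<Omega> \<T> \<psi> G\<psi> \<Longrightarrow>
        (1 / lam) * ip \<Omega> (\<lambda>x. \<phi>h x - ph x) \<psi> + \<tau> * ipv \<Omega> G\<phi>h G\<psi> = ip \<Omega> g \<psi>"
    and proj: "is_P1_projection \<Omega> \<T> \<phi>h P\<phi>h"
    and w_Hdiv: "Hdiv \<Omega> w" and w_div: "weak_div \<Omega> w Dw"
    and w_eq: "AE x in lebesgue_on \<Omega>. \<tau> * Dw x = g x + (ph x - P\<phi>h x) / lam"
    and CF_pos: "C\<^sub>F > 0"
    and CF: "\<And>\<psi> G\<psi>. H01 \<Omega> \<psi> G\<psi> \<Longrightarrow> nrm \<Omega> \<psi> \<le> C\<^sub>F * nrmv \<Omega> G\<psi>"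
  shows "3/4 * \<tau> * (nrmv \<Omega> (\<lambda>x. G\<phi> x - G\<phi>h x))\<^sup>2
           + (2 / lam) * ip \<Omega> (\<lambda>x. \<phi> x - \<phi>h x - (p x - ph x)) (\<lambda>x. \<phi> x - \<phi>h x)
         \<le> (sqrt \<tau> * nrmv \<Omega> (\<lambda>x. w x + G\<phi>h x))\<^sup>2
           + 4 * C\<^sub>F\<^sup>2 * (1 / (lam * sqrt \<tau>) * nrm \<Omega> (\<lambda>x. \<phi>h x - P\<phi>h x))\<^sup>2"
proof -
  \<comment> \<open>Only the third continuous equation, the equilibration of w and the Friedrichs inequality
    are used; the discrete problem enters only through the regularity of ph, \<phi>h and P\<phi>h.\<close>
  let ?M = "lebesgue_on \<Omega>" and ?e = "\<lambda>x. \<phi> x - \<phi>h x" and ?E = "\<lambda>x. G\<phi> x - G\<phi>h x"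
  have \<Omega>: "bounded \<Omega>" "\<Omega> \<in> sets lebesgue"
    using dom by (auto simp: lipschitz_domain_def intro: fmeasurableD lmeasurable_open)
  have H\<phi>h: "H01 \<Omega> \<phi>h G\<phi>h" using discrete_spaces(3) by (simp add: Sh_def)
  have He: "H01 \<Omega> ?e ?E" by (rule H01_diff[OF \<Omega> exact_spaces(3) H\<phi>h])
  have sq_ph: "square_integrable ?M ph"
    using discrete_spaces(2) by (intro square_integrable_continuous_on_closure[OF \<Omega>]) (simp add: Qh_def)
  have sq: "square_integrable ?M \<phi>" "square_integrable ?M \<phi>h" "square_integrable ?M p"
    "square_integrable ?M ph" "square_integrable ?M P\<phi>h" "square_integrable ?M g"
    "square_integrable ?M G\<phi>" "square_integrable ?M G\<phi>h" "square_integrable ?M w"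
    using exact_spaces(2,3) H\<phi>h sq_ph proj data(2) w_Hdiv
    by (simp_all add: H01_def H1_def is_P1_projection_def Hdiv_def
        L2_iff_square_integrable L2v_iff_square_integrable)
  have flux: "\<tau> * L2_inner ?M w ?E = - L2_inner ?M (\<lambda>x. g x + (ph x - P\<phi>h x) / lam) ?e"
    using sq params by (intro weak_div_pairing_eq[OF \<Omega> _ _ _ w_div w_eq He])
      (auto intro!: square_integrable_add square_integrable_diff square_integrable_divide_const)
  note identity = error_energy_identity[OF sq eq3[OF He, unfolded ip_eq_L2_inner ipv_eq_L2_inner] flux]
  show ?thesis
    unfolding ip_eq_L2_inner nrm_eq_L2_norm nrmv_eq_L2_norm
    using sq CF[OF He, unfolded nrm_eq_L2_norm nrmv_eq_L2_norm]
    by (intro energy_identity_imp_L2_estimate[OF _ _ _ _ params(3,2) identity])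
      (simp_all add: square_integrable_add square_integrable_diff)
qed

end
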